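(* Let $X$ be the subshift obtained from the construction described in the context, with unique shift-invariant probability measure $\mu$. Then $(X,\sigma,\mu)$ is rigid with rigidity sequence $(l_n)_{n\in\mathbb{N}}$: for every measurable set $A\subset X$, $\lim_{n\to\infty}\mu(\sigma^{l_n}A\,\triangle\,A) = 0$.
   Context: Construction. Let $l_1$ be a sufficiently large perfect square, $N_1 = 2^{\sqrt{l_1}}$, and let $\mathcal{C}_1$ be a set of $N_1$ binary words of length $l_1$. Inductively, given a set $\mathcal{C}_j$ of $N_j$ distinct words of length $l_j$ with an ordering $\mathcal{C}_j = \{u_1^{(j)},\dots,u_{N_j}^{(j)}\}$, let $P_j = \{2\}\cup\{i^2 : 2 \le i \le \lfloor\sqrt{N_j}\rfloor\}$, and let $\mathcal{C}_{j+1}$ be the set of all words $u^{(j)}_{\pi(1)}\cdots u^{(j)}_{\pi(N_j)}$ where $\pi$ ranges over permutations of $\{1,\dots,N_j\}$ fixing every element outside $P_j$; so $N_{j+1} = (\lfloor\sqrt{N_j}\rfloor)!$ and $l_{j+1} = l_jN_j$. The ordering of $\mathcal{C}_{j+1}$ is arbitrary except that its first element is $u_1^{(j)}u_2^{(j)}\cdots u_{N_j}^{(j)}$. $X\subset\{0,1\}^{\mathbb{Z}}$ is the set of bi-infinite sequences each finite subword of which is a subword of some word in $\bigcup_j\mathcal{C}_j$; it is strictly ergodic. *)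

theory Defs
  imports "HOL-Analysis.Analysis" "HOL-Probability.Probability" "HOL-Library.Sublist"
          "HOL-Combinatorics.Permutations"
begin

text \<open>Binary words are bool lists; bi-infinite sequences are functions int => bool,
  carrying the product topology (Function_Topology) and its Borel sigma algebra.\<close>

text \<open>The index set P_j = {2} union {i^2 : 2 <= i <= floor(sqrt N)}, 1-based.\<close>
definition Pset :: "nat \<Rightarrow> nat set" where
  "Pset N = {2} \<union> {i^2 | i. 2 \<le> i \<and> i^2 \<le> N}"

definition next_words :: "bool list list \<Rightarrow> bool list set" where
  "next_words us = {concat (map (\<lambda>p. us ! (\<pi> p - 1)) [1..<length us + 1]) | \<pi>.
      \<pi> permutes {1..length us} \<and> (\<forall>p \<in> {1..length us} - Pset (length us). \<pi> p = p)}"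

text \<open>U j is the ordered list of words of C_j (j >= 1; U 0 is unused).\<close>
definition valid_construction :: "(nat \<Rightarrow> bool list list) \<Rightarrow> bool" where
  "valid_construction U \<longleftrightarrow>
     (\<exists>k. distinct (U 1) \<and> length (U 1) = 2 ^ k \<and> (\<forall>w \<in> set (U 1). length w = k^2)) \<and>
     (\<forall>j\<ge>1. distinct (U (Suc j)) \<and> set (U (Suc j)) = next_words (U j) \<and>
              U (Suc j) ! 0 = concat (U j))"

definition word_len :: "(nat \<Rightarrow> bool list list) \<Rightarrow> nat \<Rightarrow> nat" where
  "word_len U j = length (U j ! 0)"

definition subshift :: "(nat \<Rightarrow> bool list list) \<Rightarrow> (int \<Rightarrow> bool) set" where
  "subshift U = {x. \<forall>i::int. \<forall>n::nat. \<exists>j\<ge>1. \<exists>w \<in> set (U j).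
       sublist (map (\<lambda>k. x (i + int k)) [0..<n]) w}"

definition shift :: "(int \<Rightarrow> bool) \<Rightarrow> (int \<Rightarrow> bool)" where
  "shift x = (\<lambda>n. x (n + 1))"

definition invariant_prob :: "(int \<Rightarrow> bool) set \<Rightarrow> (int \<Rightarrow> bool) measure \<Rightarrow> bool" where
  "invariant_prob X \<mu> \<longleftrightarrow> prob_space \<mu> \<and> space \<mu> = X \<and>
     sets \<mu> = sets (restrict_space borel X) \<and>
     (\<forall>A \<in> sets \<mu>. emeasure \<mu> (shift -` A \<inter> X) = emeasure \<mu> A)"

end

theory Submission
  imports Defs "HOL-Library.Discrete_Functions"
begin

(* Every point of X shows, in each window of length 2 l_{n+1}, a piece of a concatenation of
   words of C_{n+1}.  Two such words differ only inside the at most sqrt N_n blocks of length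
   l_n moved by the permutations, so at most a fraction 1/sqrt N_n of the positions t of a
   window satisfy x_t ~= x_{t + l_{n+1}}.  Averaging with the invariant measure gives
   mu {x. x_0 ~= x_{l_{n+1}}} <= 1/sqrt N_n, which tends to 0 since N_{n+1} >= floor(sqrt N_n)! > N_n.
   Hence every cylinder {x. x_i : C} is rigid along (l_n), and the rigid sets form a sigma algebra. *)

section \<open>Concatenations and block permutations\<close>

lemma length_concat_uniform:
  "\<forall>u\<in>set ws. length u = m \<Longrightarrow> length (concat ws) = length ws * m"
  by (induction ws) auto

lemma nth_concat_uniform:
  assumes "\<forall>u\<in>set ws. length u = m" and "q < length ws * m"
  shows "concat ws ! q = ws ! (q div m) ! (q mod m)"
  using assms
proof (induction ws arbitrary: q)
  case Nil
  then show ?case by simp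
next
  case (Cons u ws)
  have u: "length u = m" using Cons.prems(1) by simp
  have "m > 0" using Cons.prems(2) by (cases m) auto
  show ?case
  proof (cases "q < m")
    case True
    then show ?thesis using u by (simp add: nth_append)
  next
    case False
    then have "concat ws ! (q - m) = ws ! ((q - m) div m) ! ((q - m) mod m)"
      using Cons by simp
    moreover have "q div m = Suc ((q - m) div m)" "q mod m = (q - m) mod m"
      using False \<open>m > 0\<close> by (simp_all add: le_div_geq le_mod_geq)
    ultimately show ?thesis using u False by (simp add: nth_append)
  qed
qed

lemma inj_on_add_mod: "inj_on (\<lambda>t. (a + t) mod m) {..<m::nat}"
proof (rule inj_onI)
  have le: "t = t'" if "(a + t) mod m = (a + t') mod m" "t \<le> t'" "t' < m" for t t'
  proof -
    have "m dvd t' - t" using that(1,2) mod_eq_dvd_iff_nat[of "a + t" "a + t'" m] by simp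
    then show ?thesis using that(2,3) by (cases "t' - t = 0") (auto dest: dvd_imp_le)
  qed
  fix t t' assume "t \<in> {..<m}" "t' \<in> {..<m}" and eq: "(a + t) mod m = (a + t') mod m"
  then show "t = t'" using le[OF eq] le[OF eq[symmetric]] by (cases "t \<le> t'") auto
qed

text \<open>Positions q and q + m lie at the same offset q mod m of consecutive blocks, and
  t \<mapsto> (a + t) mod m is injective on a window of length m.\<close>
lemma card_period_defects_le:
  assumes len: "\<forall>u\<in>set ws. length u = m" and "finite B"
    and agree: "\<And>u v r. u \<in> set ws \<Longrightarrow> v \<in> set ws \<Longrightarrow> r < m \<Longrightarrow> r \<notin> B \<Longrightarrow> u ! r = v ! r"
  shows "card {t. t < m \<and> a + t + m < length (concat ws) \<and>
                  concat ws ! (a + t) \<noteq> concat ws ! (a + t + m)} \<le> card B"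
    (is "card ?T \<le> _")
proof -
  have "(a + t) mod m \<in> B" if t: "t \<in> ?T" for t
  proof (rule ccontr)
    assume notB: "(a + t) mod m \<notin> B"
    define q where "q = a + t"
    have m: "m > 0" using t by auto
    have q: "q + m < length ws * m" using t length_concat_uniform[OF len] by (simp add: q_def)
    have "(q + m) div m < length ws" by (rule less_mult_imp_div_less[OF q])
    then have "q div m < length ws" "Suc (q div m) < length ws" using m by simp_all
    then have "ws ! (q div m) ! (q mod m) = ws ! Suc (q div m) ! (q mod m)"
      by (intro agree nth_mem) (use notB m in \<open>simp_all add: q_def\<close>)
    moreover have "concat ws ! q = ws ! (q div m) ! (q mod m)"
      using nth_concat_uniform[OF len] q by simp
    moreover have "concat ws ! (q + m) = ws ! Suc (q div m) ! (q mod m)"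
      using nth_concat_uniform[OF len q] m by simp
    ultimately show False using t by (simp add: q_def)
  qed
  moreover have "inj_on (\<lambda>t. (a + t) mod m) ?T"
    by (rule inj_on_subset[OF inj_on_add_mod]) auto
  ultimately show ?thesis by (intro card_inj_on_le[OF _ _ \<open>finite B\<close>]) auto
qed

lemma finite_card_blocks:
  assumes "finite P" and "m > 0"
  shows "finite {r. Suc (r div m) \<in> P}" and "card {r. Suc (r div m) \<in> P} \<le> card P * m"
proof -
  have sub: "{r. Suc (r div m) \<in> P} \<subseteq> (\<lambda>(p, s). (p - 1) * m + s) ` (P \<times> {..<m})"
  proof
    fix r assume "r \<in> {r. Suc (r div m) \<in> P}"
    then show "r \<in> (\<lambda>(p, s). (p - 1) * m + s) ` (P \<times> {..<m})"
      using \<open>m > 0\<close> by (intro image_eqI[of _ _ "(Suc (r div m), r mod m)"]) auto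
  qed
  then show "finite {r. Suc (r div m) \<in> P}"
    by (rule finite_subset) (simp add: assms(1))
  have "card {r. Suc (r div m) \<in> P} \<le> card (P \<times> {..<m})"
    using sub assms(1) by (intro surj_card_le) auto
  then show "card {r. Suc (r div m) \<in> P} \<le> card P * m"
    by (simp add: card_cartesian_product)
qed

lemma Pset_eq: "Pset M = insert 2 ((\<lambda>i. i^2) ` {2..floor_sqrt M})"
  unfolding Pset_def by (auto simp: le_floor_sqrt_iff)

lemma finite_Pset: "finite (Pset M)"
  by (simp add: Pset_eq)

lemma Pset_subset: "2 \<le> M \<Longrightarrow> Pset M \<subseteq> {1..M}"
  unfolding Pset_def by auto

lemma card_Pset: "1 \<le> M \<Longrightarrow> card (Pset M) = floor_sqrt M"
proof -
  assume "1 \<le> M"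
  then have s: "1 \<le> floor_sqrt M" by (simp add: le_floor_sqrt_iff)
  have "2 \<notin> (\<lambda>i::nat. i^2) ` {2..floor_sqrt M}"
  proof
    assume "2 \<in> (\<lambda>i::nat. i^2) ` {2..floor_sqrt M}"
    then obtain i :: nat where "2 \<le> i" "i^2 = 2" by auto
    then show False using power_mono[of 2 i 2] by simp
  qed
  moreover have "inj_on (\<lambda>i::nat. i^2) {2..floor_sqrt M}"
    by (rule inj_onI) (simp add: power2_eq_iff_nonneg)
  ultimately show ?thesis using s by (simp add: Pset_eq card_image)
qed

lemma floor_sqrt_le_sqrt: "real (floor_sqrt M) \<le> sqrt (real M)"
  using floor_sqrt_power2_le[of M] by (intro real_le_rsqrt) (metis of_nat_le_iff of_nat_power)

lemma Suc_power2_le_fact: "5 \<le> s \<Longrightarrow> (Suc s)^2 \<le> fact s"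
proof (induction s rule: dec_induct)
  case base
  then show ?case by (simp add: fact_numeral)
next
  case (step s)
  have "(Suc (Suc s))^2 \<le> 4 * (Suc s)^2" by (simp add: power2_eq_square algebra_simps)
  also have "\<dots> \<le> Suc s * (Suc s)^2" using step.hyps by (intro mult_right_mono) auto
  also have "\<dots> \<le> Suc s * fact s" using step.IH by (rule mult_le_mono2)
  finally show ?case by simp
qed

lemma less_fact_floor_sqrt: "25 \<le> M \<Longrightarrow> M < fact (floor_sqrt M)"
proof -
  assume "25 \<le> M"
  then have "5 \<le> floor_sqrt M" by (simp add: le_floor_sqrt_iff)
  then show ?thesis
    using Suc_floor_sqrt_power2_gt[of M] Suc_power2_le_fact by (meson less_le_trans)
qed

lemma map_nth_pred_upt: "map (\<lambda>p. us ! (p - 1)) [1..<length us + 1] = us"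
  by (simp add: map_Suc_upt[symmetric] comp_def map_nth del: upt_Suc)

lemma concat_in_next_words: "concat us \<in> next_words us"
  unfolding next_words_def using map_nth_pred_upt[of us] permutes_id[of "{1..length us}"]
  by (intro CollectI exI[of _ id]) auto

lemma set_permuted_blocks_subset:
  assumes "\<pi> permutes {1..length us}"
  shows "set (map (\<lambda>p. us ! (\<pi> p - 1)) [1..<length us + 1]) \<subseteq> set us"
proof -
  have "us ! (\<pi> p - 1) \<in> set us" if "p \<in> {1..length us}" for p
    using permutes_in_image[OF assms, of p] that by (intro nth_mem) auto
  then show ?thesis by (auto simp del: upt_Suc simp: less_Suc_eq_le)
qed

lemma next_words_blocks:
  assumes "w \<in> next_words us"
  shows "\<exists>ws. w = concat ws \<and> length ws = length us \<and> set ws \<subseteq> set us \<and>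
           (\<forall>b < length us. Suc b \<notin> Pset (length us) \<longrightarrow> ws ! b = us ! b)"
proof -
  obtain \<pi> where w: "w = concat (map (\<lambda>p. us ! (\<pi> p - 1)) [1..<length us + 1])"
    and \<pi>: "\<pi> permutes {1..length us}"
    and id_outside: "\<forall>p \<in> {1..length us} - Pset (length us). \<pi> p = p"
    using assms unfolding next_words_def by blast
  show ?thesis
    using w set_permuted_blocks_subset[OF \<pi>] id_outside
    by (intro exI[of _ "map (\<lambda>p. us ! (\<pi> p - 1)) [1..<length us + 1]"])
      (auto simp del: upt_Suc simp: nth_upt)
qed

lemma inj_on_permuted_concat:
  assumes distinct: "distinct us" and len: "\<forall>u\<in>set us. length u = m"
    and P: "P \<subseteq> {1..length us}"
  shows "inj_on (\<lambda>\<pi>. concat (map (\<lambda>p. us ! (\<pi> p - 1)) [1..<length us + 1])) {\<pi>. \<pi> permutes P}"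
proof (rule inj_onI)
  fix \<pi> \<pi>' assume "\<pi> \<in> {\<pi>. \<pi> permutes P}" "\<pi>' \<in> {\<pi>. \<pi> permutes P}"
    and eq: "concat (map (\<lambda>p. us ! (\<pi> p - 1)) [1..<length us + 1])
           = concat (map (\<lambda>p. us ! (\<pi>' p - 1)) [1..<length us + 1])"
  then have \<pi>: "\<pi> permutes P" and \<pi>': "\<pi>' permutes P" by simp_all
  have \<pi>_range: "\<pi> permutes {1..length us}" by (rule permutes_subset[OF \<pi> P])
  have \<pi>'_range: "\<pi>' permutes {1..length us}" by (rule permutes_subset[OF \<pi>' P])
  define xs where "xs = map (\<lambda>p. us ! (\<pi> p - 1)) [1..<length us + 1]"
  define ys where "ys = map (\<lambda>p. us ! (\<pi>' p - 1)) [1..<length us + 1]"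
  have "set xs \<subseteq> set us" "set ys \<subseteq> set us"
    unfolding xs_def ys_def
    by (rule set_permuted_blocks_subset[OF \<pi>_range], rule set_permuted_blocks_subset[OF \<pi>'_range])
  then have lengths: "\<forall>(x, y) \<in> set (zip xs ys). length x = length y"
    using len by (fastforce dest: set_zip_leftD set_zip_rightD)
  have "concat xs = concat ys" using eq unfolding xs_def ys_def .
  moreover have "length xs = length ys" unfolding xs_def ys_def by simp
  ultimately have "xs = ys" using lengths by (rule concat_injective)
  then have same: "\<forall>p \<in> set [1..<length us + 1]. us ! (\<pi> p - 1) = us ! (\<pi>' p - 1)"
    unfolding xs_def ys_def map_eq_conv .
  show "\<pi> = \<pi>'"
  proof
    fix p
    show "\<pi> p = \<pi>' p"
    proof (cases "p \<in> {1..length us}")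
      case True
      then have "p \<in> set [1..<length us + 1]" by auto
      with same have "us ! (\<pi> p - 1) = us ! (\<pi>' p - 1)" by blast
      moreover have "\<pi> p \<in> {1..length us}" "\<pi>' p \<in> {1..length us}"
        using True permutes_in_image[OF \<pi>_range] permutes_in_image[OF \<pi>'_range] by simp_all
      then have "\<pi> p - 1 < length us" "\<pi>' p - 1 < length us" by auto
      ultimately have "\<pi> p - 1 = \<pi>' p - 1"
        using nth_eq_iff_index_eq[OF distinct \<open>\<pi> p - 1 < length us\<close> \<open>\<pi>' p - 1 < length us\<close>]
        by simp
      moreover have "1 \<le> \<pi> p" "1 \<le> \<pi>' p"
        using \<open>\<pi> p \<in> {1..length us}\<close> \<open>\<pi>' p \<in> {1..length us}\<close> by simp_all
      ultimately show ?thesis by linarith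
    next
      case False
      then have "p \<notin> P" using P by blast
      then show ?thesis using \<pi> \<pi>' by (simp add: permutes_not_in)
    qed
  qed
qed

lemma fact_floor_sqrt_le_card_next_words:
  assumes "distinct us" and "\<forall>u\<in>set us. length u = m" and "2 \<le> length us"
  shows "fact (floor_sqrt (length us)) \<le> card (next_words us)"
proof -
  define M where "M = length us"
  define f where "f = (\<lambda>\<pi>. concat (map (\<lambda>p. us ! (\<pi> p - 1)) [1..<M + 1]))"
  have PM: "Pset M \<subseteq> {1..M}" using Pset_subset assms(3) by (simp add: M_def)
  have sub: "f ` {\<pi>. \<pi> permutes Pset M} \<subseteq> next_words us"
  proof (rule image_subsetI)
    fix \<pi> assume "\<pi> \<in> {\<pi>. \<pi> permutes Pset M}"
    then have "\<pi> permutes {1..M}" "\<forall>p \<in> {1..M} - Pset M. \<pi> p = p"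
      using permutes_subset[OF _ PM] by (simp_all add: permutes_not_in)
    then show "f \<pi> \<in> next_words us" unfolding next_words_def f_def M_def by blast
  qed
  have fin: "finite (next_words us)"
  proof -
    have "next_words us \<subseteq> f ` {\<pi>. \<pi> permutes {1..M}}"
      unfolding next_words_def f_def M_def by blast
    then show ?thesis by (rule finite_subset) (simp add: finite_permutations)
  qed
  have inj: "inj_on f {\<pi>. \<pi> permutes Pset M}"
    unfolding f_def M_def by (rule inj_on_permuted_concat[OF assms(1,2) PM[unfolded M_def]])
  have "fact (floor_sqrt M) = card {\<pi>. \<pi> permutes Pset M}"
    using assms(3) by (intro card_permutations[symmetric] card_Pset finite_Pset) (simp add: M_def)
  also have "\<dots> = card (f ` {\<pi>. \<pi> permutes Pset M})" by (rule card_image[OF inj, symmetric])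
  also have "\<dots> \<le> card (next_words us)" by (rule card_mono[OF fin sub])
  finally show ?thesis by (simp add: M_def)
qed

section \<open>The words of the construction\<close>

text \<open>The bound 25 on l_1 = k^2 gives N_1 = 2^k \<ge> 32, and from 25 on N < (floor_sqrt N)!, so
  the numbers N_j of words strictly increase.\<close>
locale construction =
  fixes U :: "nat \<Rightarrow> bool list list"
  assumes valid: "valid_construction U" and long: "25 \<le> length (U 1 ! 0)"
begin

abbreviation N :: "nat \<Rightarrow> nat" where "N j \<equiv> length (U j)"
abbreviation l :: "nat \<Rightarrow> nat" where "l j \<equiv> word_len U j"

lemma level_Suc:
  assumes "1 \<le> j"
  shows "distinct (U (Suc j))" "set (U (Suc j)) = next_words (U j)" "U (Suc j) ! 0 = concat (U j)"
  using valid assms unfolding valid_construction_def by blast+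

lemma level_one:
  obtains k where "distinct (U 1)" "N 1 = 2 ^ k" "\<forall>w \<in> set (U 1). length w = k^2" "5 \<le> k"
proof -
  obtain k where k: "distinct (U 1)" "N 1 = 2 ^ k" "\<forall>w \<in> set (U 1). length w = k^2"
    using valid unfolding valid_construction_def by blast
  then have "U 1 ! 0 \<in> set (U 1)" by simp
  then have "5^2 \<le> k^2" using long k(3) by simp
  then have "5 \<le> k" by (rule power2_le_imp_le) simp
  with k show ?thesis by (rule that)
qed

lemma level_words:
  assumes "1 \<le> j"
  shows "U j \<noteq> [] \<and> distinct (U j) \<and> (\<forall>w\<in>set (U j). length w = l j)"
  using assms
proof (induction j rule: dec_induct)
  case base
  obtain k where k: "distinct (U 1)" "N 1 = 2 ^ k" "\<forall>w \<in> set (U 1). length w = k^2"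
    using level_one by blast
  then have "U 1 \<noteq> []" by auto
  then have "U 1 ! 0 \<in> set (U 1)" by simp
  then have "l 1 = k^2" using k(3) by (simp add: word_len_def)
  with k \<open>U 1 \<noteq> []\<close> show ?case by simp
next
  case (step j)
  then have len: "\<forall>w\<in>set (U j). length w = l j" by blast
  have "length w = N j * l j" if "w \<in> set (U (Suc j))" for w
  proof -
    have "w \<in> next_words (U j)" using that level_Suc(2)[OF step.hyps(1)] by simp
    then obtain ws where "w = concat ws" "length ws = N j" "set ws \<subseteq> set (U j)"
      using next_words_blocks by blast
    then show ?thesis using len length_concat_uniform[of ws "l j"] by auto
  qed
  moreover have "l (Suc j) = N j * l j"
    using level_Suc(3)[OF step.hyps(1)] length_concat_uniform[OF len] by (simp add: word_len_def)
  moreover have "U (Suc j) \<noteq> []"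
    using level_Suc(2)[OF step.hyps(1)] concat_in_next_words[of "U j"] by auto
  ultimately show ?case using level_Suc(1)[OF step.hyps(1)] by simp
qed

lemma word_len_Suc:
  assumes "1 \<le> j"
  shows "l (Suc j) = N j * l j"
proof -
  have "\<forall>w\<in>set (U j). length w = l j" using level_words[OF assms] by blast
  then have "length (concat (U j)) = N j * l j" by (rule length_concat_uniform)
  then show ?thesis using level_Suc(3)[OF assms] by (simp add: word_len_def)
qed

lemma word_len_pos: "1 \<le> j \<Longrightarrow> 0 < l j"
proof (induction j rule: dec_induct)
  case base
  obtain k where "N 1 = 2 ^ k" "\<forall>w \<in> set (U 1). length w = k^2" "5 \<le> k"
    using level_one by blast
  then show ?case by (auto simp: word_len_def)
next
  case (step j)
  then show ?case using level_words[OF step.hyps(1)] by (simp add: word_len_Suc)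
qed

lemma word_len_mono:
  assumes "1 \<le> j" and "j \<le> n"
  shows "l j \<le> l n"
  using assms(2)
proof (induction n rule: dec_induct)
  case (step n)
  then have "1 \<le> n" using assms(1) by simp
  then have "1 \<le> N n" using level_words[of n] by (simp add: Suc_le_eq)
  then have "l n \<le> N n * l n" by simp
  with step.IH have "l j \<le> N n * l n" by (rule order_trans)
  then show ?case using word_len_Suc[OF \<open>1 \<le> n\<close>] by simp
qed simp

lemma N_lower_bound: "1 \<le> j \<Longrightarrow> j + 24 \<le> N j"
proof (induction j rule: dec_induct)
  case base
  obtain k where "N 1 = 2 ^ k" "5 \<le> k" using level_one by blast
  moreover have "(2::nat) ^ 5 \<le> 2 ^ k" if "5 \<le> k" using that by (rule power_increasing) simp
  ultimately show ?case by simp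
next
  case (step j)
  have "N (Suc j) = card (set (U (Suc j)))"
    using distinct_card[OF level_Suc(1)[OF step.hyps(1)]] by simp
  also have "\<dots> = card (next_words (U j))" using level_Suc(2)[OF step.hyps(1)] by simp
  finally have "N (Suc j) = card (next_words (U j))" .
  moreover have "fact (floor_sqrt (N j)) \<le> card (next_words (U j))"
    using level_words[OF step.hyps(1)] step.IH by (intro fact_floor_sqrt_le_card_next_words) auto
  moreover have "N j < fact (floor_sqrt (N j))"
    using step.IH step.hyps(1) by (intro less_fact_floor_sqrt) simp
  ultimately show ?case using step.IH by simp
qed

lemma words_split:
  assumes "1 \<le> n" "n \<le> j" "w \<in> set (U j)"
  shows "\<exists>ws. w = concat ws \<and> set ws \<subseteq> set (U n)"
  using assms(2,3)
proof (induction j arbitrary: w rule: dec_induct)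
  case base
  then show ?case by (intro exI[of _ "[w]"]) auto
next
  case (step j)
  have "1 \<le> j" using assms(1) step.hyps(1) by simp
  then have "w \<in> next_words (U j)" using step.prems level_Suc(2) by simp
  then obtain vs where vs: "w = concat vs" "set vs \<subseteq> set (U j)"
    using next_words_blocks by blast
  then have "\<forall>v\<in>set vs. \<exists>ws. concat ws = v \<and> set ws \<subseteq> set (U n)" using step.IH by blast
  then obtain f where f: "\<forall>v\<in>set vs. concat (f v) = v \<and> set (f v) \<subseteq> set (U n)" by metis
  have "concat (concat (map f xs)) = concat xs" if "\<forall>v\<in>set xs. concat (f v) = v" for xs
    using that by (induction xs) auto
  then have "w = concat (concat (map f vs))" using f vs(1) by simp
  moreover have "set (concat (map f vs)) \<subseteq> set (U n)" using f by auto
  ultimately show ?case by blast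
qed

text \<open>Block b (counted from 0) of a word of level n + 1 is block Suc b of the permutation
  in next_words, which stays in place unless Suc b \<in> Pset.\<close>
lemma words_agree_outside_Pset:
  assumes n: "1 \<le> n" and "u \<in> set (U (Suc n))" "v \<in> set (U (Suc n))"
    and "r < l (Suc n)" and "Suc (r div l n) \<notin> Pset (N n)"
  shows "u ! r = v ! r"
proof -
  have "w ! r = U n ! (r div l n) ! (r mod l n)" if "w \<in> set (U (Suc n))" for w
  proof -
    have "w \<in> next_words (U n)" using that level_Suc(2)[OF n] by simp
    then obtain ws where ws: "w = concat ws" "length ws = N n" "set ws \<subseteq> set (U n)"
      "\<forall>b < N n. Suc b \<notin> Pset (N n) \<longrightarrow> ws ! b = U n ! b"
      using next_words_blocks by blast
    have len: "\<forall>x\<in>set ws. length x = l n" using ws(3) level_words[OF n] by auto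
    have r: "r < length ws * l n" using assms(4) word_len_Suc[OF n] ws(2) by simp
    then have "r div l n < N n" using ws(2) by (simp add: less_mult_imp_div_less)
    then show ?thesis using nth_concat_uniform[OF len r] ws assms(5) by simp
  qed
  then show ?thesis using assms(2,3) by simp
qed

lemma subshift_window_in_words:
  assumes n: "1 \<le> n" and y: "y \<in> subshift U"
  shows "\<exists>a ws. set ws \<subseteq> set (U n) \<and> a + 2 * l n \<le> length (concat ws) \<and>
           (\<forall>t < 2 * l n. concat ws ! (a + t) = y (int t))"
proof -
  obtain j w where j: "1 \<le> j" and w: "w \<in> set (U j)"
    and "sublist (map (\<lambda>k. y (0 + int k)) [0..<2 * l n]) w"
    using y unfolding subshift_def by blast
  then obtain ps ss where w_eq: "w = ps @ map (\<lambda>k. y (int k)) [0..<2 * l n] @ ss"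
    unfolding sublist_def by auto
  have "n \<le> j"
  proof (rule ccontr)
    assume "\<not> n \<le> j"
    then have "length w \<le> l n" using word_len_mono[OF j, of n] level_words[OF j] w by simp
    then show False using w_eq word_len_pos[OF n] by simp
  qed
  then obtain ws where ws: "w = concat ws" "set ws \<subseteq> set (U n)"
    using words_split[OF n _ w] by blast
  have "length ps + 2 * l n \<le> length (concat ws)"
    using w_eq unfolding ws(1) by simp
  moreover have "\<forall>t < 2 * l n. concat ws ! (length ps + t) = y (int t)"
    using w_eq unfolding ws(1) by (simp add: nth_append)
  ultimately show ?thesis using ws(2) by blast
qed

lemma card_period_defects_subshift:
  assumes n: "1 \<le> n" and y: "y \<in> subshift U"
  shows "card {t. t < l (Suc n) \<and> y (int t) \<noteq> y (int (t + l (Suc n)))} \<le> floor_sqrt (N n) * l n"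
proof -
  define L where "L = l (Suc n)"
  have "1 \<le> Suc n" by simp
  from subshift_window_in_words[OF this y]
  obtain a ws where ws: "set ws \<subseteq> set (U (Suc n))" "a + 2 * L \<le> length (concat ws)"
    "\<forall>t < 2 * L. concat ws ! (a + t) = y (int t)"
    unfolding L_def by blast
  define B where "B = {r. Suc (r div l n) \<in> Pset (N n)}"
  have B: "finite B" "card B \<le> card (Pset (N n)) * l n"
    unfolding B_def using finite_card_blocks[of "Pset (N n)" "l n"] word_len_pos[OF n] finite_Pset
    by simp_all
  have window: "a + t + L < length (concat ws)" "concat ws ! (a + t) = y (int t)"
      "concat ws ! (a + t + L) = y (int (t + L))" if "t < L" for t
    using that ws(2) ws(3) by (simp_all add: add.assoc)
  have "card {t. t < L \<and> y (int t) \<noteq> y (int (t + L))}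
      \<le> card {t. t < L \<and> a + t + L < length (concat ws) \<and>
                  concat ws ! (a + t) \<noteq> concat ws ! (a + t + L)}"
    by (rule card_mono) (auto simp: window)
  also have "\<dots> \<le> card B"
  proof (rule card_period_defects_le)
    show "\<forall>u\<in>set ws. length u = L" using ws(1) level_words[of "Suc n"] by (auto simp: L_def)
    show "u ! r = v ! r" if "u \<in> set ws" "v \<in> set ws" "r < L" "r \<notin> B" for u v r
      using that ws(1) by (intro words_agree_outside_Pset[OF n]) (auto simp: L_def B_def)
  qed (rule B(1))
  also have "\<dots> \<le> floor_sqrt (N n) * l n"
    using B(2) card_Pset N_lower_bound[OF n] by simp
  finally show ?thesis by (simp add: L_def)
qed

end

section \<open>Shift-invariant measures and rigidity\<close>

instance bool :: second_countable_topology
proof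
  have "open S = generate_topology UNIV S" for S :: "bool set"
    by (simp add: discrete_topology_class.open_discrete generate_topology.Basis)
  then show "\<exists>B::bool set set. countable B \<and> open = generate_topology B"
    by (intro exI[of _ UNIV]) auto
qed

definition shift_by :: "int \<Rightarrow> (int \<Rightarrow> bool) \<Rightarrow> int \<Rightarrow> bool" where
  "shift_by m x = (\<lambda>i. x (i + m))"

lemma shift_by_apply: "shift_by m x i = x (i + m)"
  by (simp add: shift_by_def)

lemma shift_by_shift_by [simp]: "shift_by a (shift_by b x) = shift_by (a + b) x"
  by (simp add: shift_by_def algebra_simps)

lemma shift_by_0 [simp]: "shift_by 0 x = x"
  by (simp add: shift_by_def)

lemma funpow_shift: "shift ^^ n = shift_by (int n)"
  by (induction n) (auto simp: shift_def shift_by_def fun_eq_iff algebra_simps)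

lemma shift_by_in_subshift:
  assumes "x \<in> subshift U"
  shows "shift_by m x \<in> subshift U"
  unfolding subshift_def mem_Collect_eq
proof (intro allI)
  fix i :: int and n :: nat
  have "\<exists>j\<ge>1. \<exists>w\<in>set (U j). sublist (map (\<lambda>k. x (i + m + int k)) [0..<n]) w"
    using assms unfolding subshift_def by blast
  then show "\<exists>j\<ge>1. \<exists>w\<in>set (U j). sublist (map (\<lambda>k. shift_by m x (i + int k)) [0..<n]) w"
    by (simp add: shift_by_def ac_simps)
qed

lemma measurable_shift_by [measurable]: "shift_by m \<in> borel \<rightarrow>\<^sub>M borel"
  unfolding shift_by_def
  by (intro borel_measurable_continuous_onI continuous_on_coordinatewise_then_product) simp

lemma pred_borel_component [measurable]: "Measurable.pred borel (\<lambda>x::int \<Rightarrow> bool. x i)"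
proof -
  have "(\<lambda>x::int \<Rightarrow> bool. x i) \<in> borel_measurable borel"
    by (rule borel_measurable_continuous_onI) simp
  then show ?thesis
    using pred_sets2[of "{True}" borel "\<lambda>x. x i" borel] by (simp add: sets_borel_eq_count_space)
qed

lemma sets_borel_eq_cylinders:
  "sets (borel :: (int \<Rightarrow> bool) measure) = sigma_sets UNIV {{x. x i \<in> C} | i C. True}"
proof -
  have "{{x::int \<Rightarrow> bool. x i \<in> C} | i C. C \<in> sets borel} = {{x. x i \<in> C} | i C. True}"
    by (simp add: sets_borel_eq_count_space)
  then show ?thesis
    by (simp add: sets_PiM_equal_borel[symmetric] sets_PiM_single)
qed

locale shift_invariant_prob =
  fixes X :: "(int \<Rightarrow> bool) set" and \<mu> :: "(int \<Rightarrow> bool) measure"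
  assumes invariant: "invariant_prob X \<mu>"
    and shift_by_closed: "\<And>x m. x \<in> X \<Longrightarrow> shift_by m x \<in> X"
begin

sublocale prob_space \<mu>
  using invariant unfolding invariant_prob_def by blast

lemma space_eq: "space \<mu> = X"
  using invariant unfolding invariant_prob_def by blast

lemma sets_iff: "A \<in> sets \<mu> \<longleftrightarrow> (\<exists>B \<in> sets borel. A = X \<inter> B)"
  using invariant unfolding invariant_prob_def by (auto simp: sets_restrict_space)

lemma sets_subset: "A \<in> sets \<mu> \<Longrightarrow> A \<subseteq> X"
  using sets.sets_into_space space_eq by blast

lemma vimage_shift_by_sets: "A \<in> sets \<mu> \<Longrightarrow> shift_by m -` A \<inter> X \<in> sets \<mu>"
proof -
  assume "A \<in> sets \<mu>"
  then obtain B where B: "B \<in> sets borel" and A: "A = X \<inter> B" using sets_iff by blast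
  have "shift_by m -` A \<inter> X = X \<inter> shift_by m -` B"
    using shift_by_closed A by blast
  moreover have "shift_by m -` B \<in> sets borel"
    using measurable_sets[OF measurable_shift_by B] by simp
  ultimately show ?thesis using sets_iff by blast
qed

lemma measure_vimage_shift_by:
  assumes "A \<in> sets \<mu>"
  shows "measure \<mu> (shift_by m -` A \<inter> X) = measure \<mu> A"
proof -
  have forward: "measure \<mu> (shift_by (int n) -` A \<inter> X) = measure \<mu> A" if "A \<in> sets \<mu>" for n A
    using that
  proof (induction n arbitrary: A)
    case 0
    then show ?case using sets_subset by (simp add: Int_absorb2)
  next
    case (Suc n)
    define S where "S = shift_by (int n) -` A \<inter> X"
    have "shift_by (int (Suc n)) -` A \<inter> X = shift -` S \<inter> X"
      using shift_by_closed[of _ 1] by (auto simp: S_def shift_def shift_by_def ac_simps)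
    also have "measure \<mu> \<dots> = measure \<mu> S"
    proof -
      have "S \<in> sets \<mu>" unfolding S_def by (rule vimage_shift_by_sets[OF Suc.prems])
      then show ?thesis using invariant unfolding invariant_prob_def measure_def by simp
    qed
    also have "\<dots> = measure \<mu> A" using Suc by (simp add: S_def)
    finally show ?case .
  qed
  show ?thesis
  proof (cases "0 \<le> m")
    case True
    then show ?thesis using forward[OF assms, of "nat m"] by simp
  next
    case False
    define A' where "A' = shift_by m -` A \<inter> X"
    have "shift_by (int (nat (- m))) -` A' \<inter> X = A"
      using False sets_subset[OF assms] shift_by_closed by (force simp: A'_def)
    then show ?thesis
      using forward[of A' "nat (- m)"] vimage_shift_by_sets[OF assms] by (simp add: A'_def)
  qed
qed

lemma sets_coordinates_neq: "X \<inter> {x. x i \<noteq> x k} \<in> sets \<mu>"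
proof -
  have "{x::int \<Rightarrow> bool. x i \<noteq> x k} \<in> sets borel" by measurable
  then show ?thesis using sets_iff by blast
qed

lemma image_shift_by_eq:
  assumes "A \<subseteq> X"
  shows "shift_by m ` A = shift_by (- m) -` A \<inter> X"
proof
  show "shift_by m ` A \<subseteq> shift_by (- m) -` A \<inter> X"
    using assms shift_by_closed by auto
  show "shift_by (- m) -` A \<inter> X \<subseteq> shift_by m ` A"
  proof
    fix y assume "y \<in> shift_by (- m) -` A \<inter> X"
    moreover have "y = shift_by m (shift_by (- m) y)" by simp
    ultimately show "y \<in> shift_by m ` A" by blast
  qed
qed

lemma image_shift_by_sets: "A \<in> sets \<mu> \<Longrightarrow> shift_by m ` A \<in> sets \<mu>"
  using image_shift_by_eq[OF sets_subset] vimage_shift_by_sets by metis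

lemma measure_image_shift_by: "A \<in> sets \<mu> \<Longrightarrow> measure \<mu> (shift_by m ` A) = measure \<mu> A"
  using image_shift_by_eq[OF sets_subset] measure_vimage_shift_by by metis

definition rigid_along :: "(nat \<Rightarrow> int) \<Rightarrow> (int \<Rightarrow> bool) set \<Rightarrow> bool" where
  "rigid_along m A \<longleftrightarrow>
     (\<lambda>n. measure \<mu> (sym_diff (shift_by (m n) ` A) A)) \<longlonglongrightarrow> 0"

lemma rigid_along_Diff:
  assumes "A \<in> sets \<mu>" and "rigid_along m A"
  shows "rigid_along m (X - A)"
proof -
  have "sym_diff (shift_by k ` (X - A)) (X - A) = sym_diff (shift_by k ` A) A" for k
    using image_shift_by_eq[of "X - A" k] image_shift_by_eq[of A k] sets_subset[OF assms(1)]
      shift_by_closed[of _ "- k"] by auto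
  then show ?thesis using assms(2) by (simp add: rigid_along_def)
qed

lemma measure_sym_diff_UN_le:
  fixes A :: "nat \<Rightarrow> (int \<Rightarrow> bool) set"
  assumes sets: "\<And>k. A k \<in> sets \<mu>"
  shows "measure \<mu> (sym_diff (shift_by j ` (\<Union>k. A k)) (\<Union>k. A k))
    \<le> (\<Sum>k<K. measure \<mu> (sym_diff (shift_by j ` A k) (A k)))
       + 2 * measure \<mu> ((\<Union>k. A k) - (\<Union>k<K. A k))"
proof -
  define R where "R = (\<Union>k. A k) - (\<Union>k<K. A k)"
  have R_sets: "R \<in> sets \<mu>" unfolding R_def using sets by blast
  have diffs_sets: "sym_diff (shift_by j ` A k) (A k) \<in> sets \<mu>" for k
    using sets image_shift_by_sets by blast
  have unions: "(\<Union>k<K. sym_diff (shift_by j ` A k) (A k)) \<in> sets \<mu>" "shift_by j ` R \<in> sets \<mu>"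
    using diffs_sets image_shift_by_sets R_sets by blast+
  have "sym_diff (shift_by j ` (\<Union>k. A k)) (\<Union>k. A k)
      \<subseteq> (\<Union>k<K. sym_diff (shift_by j ` A k) (A k)) \<union> (R \<union> shift_by j ` R)"
    unfolding R_def by blast
  then have "measure \<mu> (sym_diff (shift_by j ` (\<Union>k. A k)) (\<Union>k. A k))
      \<le> measure \<mu> ((\<Union>k<K. sym_diff (shift_by j ` A k) (A k)) \<union> (R \<union> shift_by j ` R))"
    using unions R_sets by (intro finite_measure_mono) auto
  also have "\<dots> \<le> measure \<mu> (\<Union>k<K. sym_diff (shift_by j ` A k) (A k))
      + measure \<mu> (R \<union> shift_by j ` R)"
    using unions R_sets by (intro measure_Un_le) auto
  also have "\<dots> \<le> (\<Sum>k<K. measure \<mu> (sym_diff (shift_by j ` A k) (A k)))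
      + (measure \<mu> R + measure \<mu> (shift_by j ` R))"
    using diffs_sets unions R_sets by (intro add_mono measure_UNION_le measure_Un_le) auto
  also have "\<dots> = (\<Sum>k<K. measure \<mu> (sym_diff (shift_by j ` A k) (A k))) + 2 * measure \<mu> R"
    using measure_image_shift_by[OF R_sets] by simp
  finally show ?thesis by (simp add: R_def)
qed

lemma rigid_along_UN:
  fixes A :: "nat \<Rightarrow> (int \<Rightarrow> bool) set"
  assumes sets: "\<And>k. A k \<in> sets \<mu>" and rigid: "\<And>k. rigid_along m (A k)"
  shows "rigid_along m (\<Union>k. A k)"
  unfolding rigid_along_def
proof (rule tendstoI)
  fix e :: real assume "0 < e"
  define F where "F K = (\<Union>k<K. A k)" for K
  have F_sets: "F K \<in> sets \<mu>" for K unfolding F_def using sets by blast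
  have UN_sets: "(\<Union>k. A k) \<in> sets \<mu>" using sets by blast
  have F_sub: "F K \<subseteq> (\<Union>k. A k)" for K unfolding F_def by blast
  have "incseq F" unfolding incseq_def F_def by (auto intro: less_le_trans)
  then have "(\<lambda>K. measure \<mu> (F K)) \<longlonglongrightarrow> measure \<mu> (\<Union>K. F K)"
    using F_sets by (intro finite_Lim_measure_incseq) auto
  moreover have "(\<Union>K. F K) = (\<Union>k. A k)" unfolding F_def by blast
  ultimately have lim: "(\<lambda>K. measure \<mu> (F K)) \<longlonglongrightarrow> measure \<mu> (\<Union>k. A k)" by simp
  have "measure \<mu> (\<Union>k. A k) - e / 4 < measure \<mu> (\<Union>k. A k)" using \<open>0 < e\<close> by simp
  from order_tendstoD(1)[OF lim this]
  obtain K where "measure \<mu> (\<Union>k. A k) - e / 4 < measure \<mu> (F K)"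
    by (auto simp: eventually_sequentially)
  then have tail: "measure \<mu> ((\<Union>k. A k) - F K) < e / 4"
    using finite_measure_Diff[OF UN_sets F_sets F_sub] by simp
  have "(\<lambda>n. \<Sum>k<K. measure \<mu> (sym_diff (shift_by (m n) ` A k) (A k))) \<longlonglongrightarrow> 0"
    using rigid by (intro tendsto_null_sum) (simp add: rigid_along_def)
  moreover have "0 < e / 2" using \<open>0 < e\<close> by simp
  ultimately have "\<forall>\<^sub>F n in sequentially.
      (\<Sum>k<K. measure \<mu> (sym_diff (shift_by (m n) ` A k) (A k))) < e / 2"
    by (rule order_tendstoD(2))
  then show "\<forall>\<^sub>F n in sequentially.
      dist (measure \<mu> (sym_diff (shift_by (m n) ` (\<Union>k. A k)) (\<Union>k. A k))) 0 < e"
  proof eventually_elim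
    case (elim n)
    then show ?case
      using measure_sym_diff_UN_le[where A = A and j = "m n" and K = K, OF sets] tail by (simp add: F_def)
  qed
qed

lemma rigid_along_cylinder:
  assumes "(\<lambda>n. measure \<mu> (X \<inter> {x. x 0 \<noteq> x (m n)})) \<longlonglongrightarrow> 0"
  shows "rigid_along m (X \<inter> {x. x i \<in> C})"
  unfolding rigid_along_def
proof (rule tendsto_sandwich[OF _ _ tendsto_const assms])
  define Z where "Z = X \<inter> {x. x i \<in> C}"
  have "measure \<mu> (sym_diff (shift_by k ` Z) Z) \<le> measure \<mu> (X \<inter> {x. x 0 \<noteq> x k})" for k
  proof -
    have "shift_by k ` Z = X \<inter> {x. x (i - k) \<in> C}"
      using image_shift_by_eq[of Z k] by (auto simp: Z_def shift_by_apply intro: shift_by_closed)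
    then have "sym_diff (shift_by k ` Z) Z \<subseteq> shift_by (i - k) -` (X \<inter> {x. x 0 \<noteq> x k}) \<inter> X"
      by (auto simp: Z_def shift_by_apply intro: shift_by_closed)
    then have "measure \<mu> (sym_diff (shift_by k ` Z) Z)
        \<le> measure \<mu> (shift_by (i - k) -` (X \<inter> {x. x 0 \<noteq> x k}) \<inter> X)"
      using vimage_shift_by_sets[OF sets_coordinates_neq] by (intro finite_measure_mono)
    then show ?thesis using measure_vimage_shift_by[OF sets_coordinates_neq] by simp
  qed
  then show "\<forall>\<^sub>F n in sequentially.
      measure \<mu> (sym_diff (shift_by (m n) ` Z) Z) \<le> measure \<mu> (X \<inter> {x. x 0 \<noteq> x (m n)})"
    by simp
qed simp

text \<open>The sets rigid along m form a sigma algebra, so rigidity of the cylinders suffices.\<close>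
lemma rigid_along_sets:
  assumes "(\<lambda>n. measure \<mu> (X \<inter> {x. x 0 \<noteq> x (m n)})) \<longlonglongrightarrow> 0" and "A \<in> sets \<mu>"
  shows "rigid_along m A"
proof -
  have "rigid_along m (X \<inter> B)" if "B \<in> sigma_sets UNIV {{x. x i \<in> C} | i C. True}" for B
    using that
  proof (induction rule: sigma_sets.induct)
    case (Basic B)
    then show ?case using rigid_along_cylinder[OF assms(1)] by blast
  next
    case Empty
    then show ?case by (simp add: rigid_along_def)
  next
    case (Compl B)
    then have "X \<inter> B \<in> sets \<mu>" using sets_iff sets_borel_eq_cylinders by blast
    moreover have "X \<inter> (UNIV - B) = X - X \<inter> B" by blast
    ultimately show ?case using rigid_along_Diff Compl.IH by simp
  next
    case (Union B)
    then have "X \<inter> B k \<in> sets \<mu>" for k using sets_iff sets_borel_eq_cylinders by blast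
    then have "rigid_along m (\<Union>k. X \<inter> B k)" using Union.IH by (rule rigid_along_UN)
    moreover have "X \<inter> (\<Union>k. B k) = (\<Union>k. X \<inter> B k)" by blast
    ultimately show ?case by (simp only:)
  qed
  then show ?thesis using assms(2) sets_iff sets_borel_eq_cylinders by auto
qed

text \<open>Averaging over the L positions of a window: by invariance each position contributes
  the measure of the defect set, while pointwise at most c positions are defects.\<close>
lemma measure_defects_le:
  assumes "0 < L" and defects: "\<And>y. y \<in> X \<Longrightarrow> card {t. t < L \<and> y (int t) \<noteq> y (int (t + L))} \<le> c"
  shows "measure \<mu> (X \<inter> {x. x 0 \<noteq> x (int L)}) \<le> c / L"
proof -
  define D where "D = X \<inter> {x. x 0 \<noteq> x (int L)}"
  define B where "B t = shift_by (int t) -` D \<inter> X" for t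
  have D_sets: "D \<in> sets \<mu>" unfolding D_def by (rule sets_coordinates_neq)
  have B_sets: "B t \<in> sets \<mu>" for t unfolding B_def by (rule vimage_shift_by_sets[OF D_sets])
  have B_integrable: "integrable \<mu> (indicat_real (B t))" for t
    using B_sets by (simp add: less_top[symmetric])
  have B_iff: "y \<in> B t \<longleftrightarrow> y \<in> X \<and> y (int t) \<noteq> y (int (t + L))" for y t
    using shift_by_closed[of y "int t"] by (auto simp: B_def D_def shift_by_apply ac_simps)
  have "L * measure \<mu> D = (\<Sum>t<L. measure \<mu> (B t))"
    using measure_vimage_shift_by[OF D_sets] by (simp add: B_def)
  also have "\<dots> = (\<Sum>t<L. integral\<^sup>L \<mu> (indicator (B t)))"
    using B_sets by (simp add: sets.Int_space_eq2)
  also have "\<dots> = integral\<^sup>L \<mu> (\<lambda>y. \<Sum>t<L. indicator (B t) y)"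
    using B_integrable by (rule Bochner_Integration.integral_sum[symmetric])
  also have "\<dots> \<le> integral\<^sup>L \<mu> (\<lambda>y. real c)"
  proof (rule integral_mono)
    fix y assume "y \<in> space \<mu>"
    then have "y \<in> X" using space_eq by simp
    have "(\<Sum>t<L. indicator (B t) y :: real) = card {t. t < L \<and> y \<in> B t}"
      by (simp add: indicator_def sum.If_cases Int_def lessThan_def)
    also have "\<dots> \<le> c" using defects[OF \<open>y \<in> X\<close>] B_iff \<open>y \<in> X\<close> by simp
    finally show "(\<Sum>t<L. indicator (B t) y :: real) \<le> c" .
  qed (use B_integrable in auto)
  also have "\<dots> = c" by (simp add: prob_space)
  finally show ?thesis using \<open>0 < L\<close> by (simp add: D_def field_simps)
qed

end

lemma (in construction) measure_defects_tendsto_0: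
  assumes "invariant_prob (subshift U) \<mu>"
  shows "(\<lambda>n. measure \<mu> (subshift U \<inter> {x. x 0 \<noteq> x (int (l n))})) \<longlonglongrightarrow> 0"
proof -
  interpret shift_invariant_prob "subshift U" \<mu>
    by unfold_locales (use assms shift_by_in_subshift in auto)
  have bound: "measure \<mu> (subshift U \<inter> {x. x 0 \<noteq> x (int (l (Suc n)))}) \<le> inverse (sqrt (real n))"
    if n: "1 \<le> n" for n
  proof -
    have "0 < N n" using N_lower_bound[OF n] by linarith
    then have Nn: "0 < real (N n)" by (simp only: of_nat_0_less_iff)
    have "measure \<mu> (subshift U \<inter> {x. x 0 \<noteq> x (int (l (Suc n)))})
        \<le> real (floor_sqrt (N n) * l n) / real (l (Suc n))"
      by (rule measure_defects_le[OF word_len_pos card_period_defects_subshift[OF n]]) simp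
    also have "\<dots> = real (floor_sqrt (N n)) / real (N n)"
      using word_len_pos[OF n] by (simp add: word_len_Suc[OF n])
    also have "\<dots> \<le> sqrt (real (N n)) / real (N n)"
      using Nn by (intro divide_right_mono[OF floor_sqrt_le_sqrt]) simp
    also have "\<dots> = inverse (sqrt (real (N n)))"
      using Nn by (simp add: field_simps)
    also have "\<dots> \<le> inverse (sqrt (real n))"
      using N_lower_bound[OF n] n by (intro le_imp_inverse_le) simp_all
    finally show ?thesis .
  qed
  have lim: "(\<lambda>n. inverse (sqrt (real n))) \<longlonglongrightarrow> 0"
    using tendsto_real_sqrt[OF lim_inverse_n] by (simp add: real_sqrt_inverse)
  have ev: "\<forall>\<^sub>F n in sequentially.
      measure \<mu> (subshift U \<inter> {x. x 0 \<noteq> x (int (l (Suc n)))}) \<le> inverse (sqrt (real n))"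
    unfolding eventually_sequentially using bound by blast
  have "(\<lambda>n. measure \<mu> (subshift U \<inter> {x. x 0 \<noteq> x (int (l (Suc n)))})) \<longlonglongrightarrow> 0"
    by (rule tendsto_sandwich[OF _ ev tendsto_const lim]) simp
  then show ?thesis by (rule LIMSEQ_imp_Suc)
qed

theorem mainTheorem10:
  shows "\<exists>L::nat. \<forall>U \<mu>. valid_construction U \<and> length (U 1 ! 0) \<ge> L \<and>
           invariant_prob (subshift U) \<mu> \<longrightarrow>
           (\<forall>A \<in> sets \<mu>. (\<lambda>n. measure \<mu> (((shift ^^ word_len U n) ` A - A) \<union>
                                             (A - (shift ^^ word_len U n) ` A)))
                          \<longlonglongrightarrow> 0)"
proof (intro exI[of _ 25] allI impI ballI)
  fix U \<mu> A
  assume H: "valid_construction U \<and> 25 \<le> length (U 1 ! 0) \<and> invariant_prob (subshift U) \<mu>"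
    and A: "A \<in> sets \<mu>"
  interpret construction U
    by unfold_locales (use H in auto)
  interpret shift_invariant_prob "subshift U" \<mu>
    by unfold_locales (use H shift_by_in_subshift in auto)
  have "(\<lambda>n. measure \<mu> (subshift U \<inter> {x. x 0 \<noteq> x (int (word_len U n))})) \<longlonglongrightarrow> 0"
    using H by (intro measure_defects_tendsto_0) simp
  then have "rigid_along (\<lambda>n. int (word_len U n)) A"
    using A by (rule rigid_along_sets)
  then show "(\<lambda>n. measure \<mu> (((shift ^^ word_len U n) ` A - A) \<union> (A - (shift ^^ word_len U n) ` A)))
      \<longlonglongrightarrow> 0"
    unfolding rigid_along_def funpow_shift .
qed

end
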